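(* Let $\Sigma=(X,U_c,\phi)$ be a control system (in the sense defined in the context) satisfying the standing assumptions: (a) $U_c=BC(\mathbb{R}_{\geq 0};U)$; (b) $0$ is the unique equilibrium point of $\Sigma$; (c) $\Sigma$ is forward-complete. If $\Sigma$ admits an FTISS Lyapunov functional, then $\Sigma$ is finite-time input-to-state stable (FTISS), i.e., there exist $\beta\in\mathcal{GKL}$ and $\gamma\in\mathcal{K}$ such that $$\|\phi(t,x,u)\|_X\leq \beta(\|x\|_X,t)+\gamma(\|u\|_{U_c})\quad\text{for all }(t,x,u)\in\mathbb{R}_{\geq 0}\times X\times U_c.$$
   Context: $\mathbb{R}_{\geq 0}=[0,\infty)$, $\mathbb{R}_{>0}=(0,\infty)$. $BC(\mathbb{R}_{\geq 0};U)$ is the set of continuous $u:\mathbb{R}_{\geq0}\to U$ with $\|u\|_{U_c}:=\sup_{s\geq 0}\|u(s)\|_U<\infty$. Control system: $X$, $U$ are Banach spaces, $U_c\subset\{u:\mathbb{R}_{\geq0}\to U\}$ is a normed vector space such that (i) for all $u\in U_c$, $\tau\geq 0$, the shift $u(\cdot+\tau)\in U_c$ with $\|u(\cdot+\tau)\|_{U_c}\le\|u\|_{U_c}$; (ii) for $u_1,u_2\in U_c$ and $t>0$, the concatenation equal to $u_1(\tau)$ for $\tau\in[0,t]$ and $u_2(\tau-t)$ otherwise belongs to $U_c$. The transition map $\phi:D_\phi\to X$, $D_\phi\subseteq \mathbb{R}_{\geq0}\times X\times U_c$, satisfies: $\phi(0,x,u)=x$; causality ($\phi(t,x,\tilde u)=\phi(t,x,u)$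 whenever $\tilde u=u$ on $[0,t]$); $t\mapsto\phi(t,x,u)$ is continuous; cocycle property $\phi(h,\phi(t,x,u),u(t+\cdot))=\phi(t+h,x,u)$. Forward-complete means $\phi(t,x,u)$ is well defined for every $(t,x,u)\in\mathbb{R}_{\geq0}\times X\times U_c$. Equilibrium point $0$: $\phi(t,0,0)=0$ for all $t\ge 0$. Comparison functions: $\mathcal{K}$ = continuous strictly increasing $\gamma:\mathbb{R}_{\geq0}\to\mathbb{R}_{\geq0}$ with $\gamma(0)=0$; $\mathcal{K}_\infty$ = unbounded functions in $\mathcal{K}$. $\beta:\mathbb{R}_{\geq0}\times\mathbb{R}_{\geq0}\to\mathbb{R}_{\geq0}$ is in $\mathcal{GKL}$ if it is continuous, $s\mapsto\beta(s,0)$ is in $\mathcal{K}$, and for each fixed $s$ the map $t\mapsto\beta(s,t)$ is continuous, decreases to zero, and there is a nonnegative continuous function $T(s)$ with $\beta(s,t)=0$ for all $t\geq T(s)$. Lie derivative: for $x\in X$, $u\in U_c$ and $V$ defined near $x$, $\dot V_u(x):=\limsup_{t\to0^+}\frac{V(\phi(t,x,u))-V(x)}{t}$. FTISS Lyapunov functional: a continuous $V:X\to\mathbb{R}_{\geq0}$ for which there exist $M>0$, $\sigma_0\in(0,1)$, $\alpha_1,\alpha_2\in\mathcal{K}_\infty$, $\chi\in\mathcal{K}$ with $\alpha_1(\|x\|_X)\le V(x)\le\alpha_2(\|x\|_X)$ for all $x\in X$, and for all $u\in U_c$: $\|x\|_X\geq\chi(\|u\|_{U_c})\Rightarrow \dot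 V_u(x)\leq -MV^{\sigma_0}(x)$. *)

theory Defs
  imports "HOL-Analysis.Analysis"
begin

text \<open>The input space U_c = BC(R_{>=0}; U): continuous bounded functions on [0,inf).
  Inputs are represented as total functions real => 'u; only their restriction to
  [0,inf) matters (norm, causality).\<close>
definition BC :: "(real \<Rightarrow> 'u::real_normed_vector) set" where
  "BC = {u. continuous_on {0..} u \<and> bounded (u ` {0..})}"

definition ucnorm :: "(real \<Rightarrow> 'u::real_normed_vector) \<Rightarrow> real" where
  "ucnorm u = (SUP s\<in>{0..}. norm (u s))"

definition class_K :: "(real \<Rightarrow> real) \<Rightarrow> bool" where
  "class_K g \<longleftrightarrow> continuous_on {0..} g \<and> strict_mono_on {0..} g \<and> g 0 = 0"

definition class_Kinf :: "(real \<Rightarrow> real) \<Rightarrow> bool" where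
  "class_Kinf g \<longleftrightarrow> class_K g \<and> filterlim g at_top at_top"

definition class_GKL :: "(real \<Rightarrow> real \<Rightarrow> real) \<Rightarrow> bool" where
  "class_GKL \<beta> \<longleftrightarrow>
     continuous_on ({0..} \<times> {0..}) (\<lambda>(s,t). \<beta> s t) \<and>
     (\<forall>s\<ge>0. \<forall>t\<ge>0. \<beta> s t \<ge> 0) \<and>
     class_K (\<lambda>s. \<beta> s 0) \<and>
     (\<forall>s\<ge>0. continuous_on {0..} (\<beta> s) \<and> antimono_on {0..} (\<beta> s) \<and>
              ((\<beta> s) \<longlongrightarrow> 0) at_top) \<and>
     (\<exists>T. continuous_on {0..} T \<and> (\<forall>s\<ge>0. T s \<ge> 0 \<and> (\<forall>t\<ge>T s. \<beta> s t = 0)))"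

text \<open>Control system with U_c = BC, forward complete (phi total on t >= 0).\<close>
definition control_system ::
  "(real \<Rightarrow> 'x::banach \<Rightarrow> (real \<Rightarrow> 'u::banach) \<Rightarrow> 'x) \<Rightarrow> bool" where
  "control_system \<phi> \<longleftrightarrow>
     (\<forall>x. \<forall>u\<in>BC. \<phi> 0 x u = x) \<and>
     (\<forall>t\<ge>0. \<forall>x. \<forall>u\<in>BC. \<forall>v\<in>BC. (\<forall>s\<in>{0..t}. u s = v s) \<longrightarrow> \<phi> t x u = \<phi> t x v) \<and>
     (\<forall>x. \<forall>u\<in>BC. continuous_on {0..} (\<lambda>t. \<phi> t x u)) \<and>
     (\<forall>t\<ge>0. \<forall>h\<ge>0. \<forall>x. \<forall>u\<in>BC. \<phi> h (\<phi> t x u) (\<lambda>s. u (t + s)) = \<phi> (t + h) x u)"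

definition equilibrium :: "(real \<Rightarrow> 'x::banach \<Rightarrow> (real \<Rightarrow> 'u::banach) \<Rightarrow> 'x) \<Rightarrow> 'x \<Rightarrow> bool" where
  "equilibrium \<phi> x \<longleftrightarrow> (\<forall>t\<ge>0. \<phi> t x (\<lambda>_. 0) = x)"

definition lie_deriv ::
  "(real \<Rightarrow> 'x \<Rightarrow> (real \<Rightarrow> 'u) \<Rightarrow> 'x) \<Rightarrow> ('x \<Rightarrow> real) \<Rightarrow> (real \<Rightarrow> 'u) \<Rightarrow> 'x \<Rightarrow> ereal" where
  "lie_deriv \<phi> V u x = Limsup (at_right 0) (\<lambda>t. ereal ((V (\<phi> t x u) - V x) / t))"

definition FTISS_Lyapunov ::
  "(real \<Rightarrow> 'x::banach \<Rightarrow> (real \<Rightarrow> 'u::banach) \<Rightarrow> 'x) \<Rightarrow> ('x \<Rightarrow> real) \<Rightarrow> bool" where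
  "FTISS_Lyapunov \<phi> V \<longleftrightarrow>
     continuous_on UNIV V \<and> (\<forall>x. V x \<ge> 0) \<and>
     (\<exists>M \<sigma>0 \<alpha>1 \<alpha>2 chi. M > 0 \<and> 0 < \<sigma>0 \<and> \<sigma>0 < 1 \<and>
        class_Kinf \<alpha>1 \<and> class_Kinf \<alpha>2 \<and> class_K chi \<and>
        (\<forall>x. \<alpha>1 (norm x) \<le> V x \<and> V x \<le> \<alpha>2 (norm x)) \<and>
        (\<forall>x. \<forall>u\<in>BC. norm x \<ge> chi (ucnorm u) \<longrightarrow>
              lie_deriv \<phi> V u x \<le> ereal (- M * V x powr \<sigma>0)))"

definition FTISS :: "(real \<Rightarrow> 'x::banach \<Rightarrow> (real \<Rightarrow> 'u::banach) \<Rightarrow> 'x) \<Rightarrow> bool" where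
  "FTISS \<phi> \<longleftrightarrow> (\<exists>\<beta> \<gamma>. class_GKL \<beta> \<and> class_K \<gamma> \<and>
     (\<forall>t\<ge>0. \<forall>x. \<forall>u\<in>BC. norm (\<phi> t x u) \<le> \<beta> (norm x) t + \<gamma> (ucnorm u)))"

end

theory Submission
  imports Defs
begin

(* Along a trajectory, as long as V exceeds alpha2 (chi |u|), the Lyapunov condition makes V
   decrease and, by concavity of s powr (1 - sigma), makes V powr (1 - sigma) decrease at rate at
   least (1 - sigma) M / 2. The condition only bounds an upper Dini derivative, so both monotonicity
   statements come from a last-crossing-time argument instead of integration. Hence V stays below
   max (V x) (alpha2 (chi |u|)) and falls below alpha2 (chi |u|) before the settling time
   V x powr (1 - sigma) / ((1 - sigma) M / 2). Inverting alpha1 turns these bounds into the FTISS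
   estimate, with beta s t equal to alpha1^-1 (alpha2 s) up to a settling time depending
   continuously on s, and vanishing linearly afterwards. *)

lemma le_max_if_decreasing_above:
  fixes f :: "real \<Rightarrow> real"
  assumes "a \<le> b" and cont: "continuous_on {a..b} f"
    and decr: "\<And>t. a \<le> t \<Longrightarrow> t < b \<Longrightarrow> c < f t \<Longrightarrow>
      \<forall>\<^sub>F h in at_right 0. f (t + h) < f t"
  shows "f b \<le> max (f a) c"
proof (rule ccontr)
  assume "\<not> ?thesis"
  then have "max (f a) c < f b"
    by linarith
  define L where "L = (max (f a) c + f b) / 2"
  have L: "max (f a) c < L" "L < f b"
    using \<open>max (f a) c < f b\<close> by (auto simp: L_def)
  define S where "S = {t \<in> {a..b}. f t = L}"
  have "S \<noteq> {}"
    using IVT'[of f a L b] L \<open>a \<le> b\<close> cont by (auto simp: S_def)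
  moreover have "bdd_above S"
    by (auto simp: S_def intro!: bdd_aboveI[of _ b])
  moreover have "closed S"
    unfolding S_def by (rule continuous_closed_preimage_constant[OF cont]) auto
  ultimately have "Sup S \<in> S"
    by (rule closed_contains_Sup)
  define s where "s = Sup S"
  have s: "a \<le> s" "s < b" "f s = L"
    using \<open>Sup S \<in> S\<close> L(2) by (auto simp: S_def s_def order_le_less)
  \<comment> \<open>\<open>s\<close> is the last time before \<open>b\<close> at which \<open>f = L\<close>, so \<open>f > L\<close> right after it.\<close>
  have above: "L < f t" if t: "s < t" "t \<le> b" for t
  proof (rule ccontr)
    assume "\<not> L < f t"
    moreover have "continuous_on {t..b} f"
      using cont s t by (auto intro: continuous_on_subset)
    ultimately obtain y where "t \<le> y" "y \<le> b" "f y = L"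
      using IVT'[of f t L b] L t by auto
    then have "y \<in> S"
      using t s by (auto simp: S_def)
    then have "y \<le> s"
      unfolding s_def using \<open>bdd_above S\<close> by (rule cSup_upper)
    then show False
      using t \<open>t \<le> y\<close> by simp
  qed
  have "\<forall>\<^sub>F h in at_right 0. f (s + h) < f s \<and> 0 < h \<and> h < b - s"
    using decr[of s] s L(1) eventually_at_right_less[of 0]
      eventually_at_right_field[where x=0 and P="\<lambda>h. h < b - s"]
    by (auto intro!: eventually_conj exI[of _ "b - s"])
  then obtain h where "f (s + h) < f s" "0 < h" "h < b - s"
    using eventually_happens trivial_limit_at_right_real by blast
  with above[of "s + h"] s show False
    by simp
qed

lemma powr_le_tangent:
  fixes x y q :: real
  assumes "0 \<le> y" "y < x" "0 < q" "q < 1"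
  shows "y powr q \<le> x powr q + q * x powr (q - 1) * (y - x)"
proof (cases "y = 0")
  case True
  have "x powr (q - 1) * x = x powr q"
    using assms by (simp add: powr_diff)
  then show ?thesis
    using True assms by (simp add: algebra_simps)
next
  case False
  then obtain z where z: "y < z" "z < x" "x powr q - y powr q = (x - y) * (q * z powr (q - 1))"
    using MVT2[of y x "\<lambda>x. x powr q" "\<lambda>x. q * x powr (q - 1)"] assms
    by (force intro!: has_real_derivative_powr)
  have "x powr (q - 1) \<le> z powr (q - 1)"
    using z assms False by (intro powr_mono2') auto
  then have "(x - y) * (q * x powr (q - 1)) \<le> (x - y) * (q * z powr (q - 1))"
    using assms by (intro mult_left_mono) auto
  then show ?thesis
    using z by (simp add: algebra_simps)
qed

lemma powr_decrease_if_decay: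
  fixes x y m h \<sigma> :: real
  assumes "0 \<le> y" "0 < x" "0 < \<sigma>" "\<sigma> < 1" "0 \<le> m" "0 \<le> h"
    and decay: "y - x < - m * x powr \<sigma> * h"
  shows "y powr (1 - \<sigma>) < x powr (1 - \<sigma>) - (1 - \<sigma>) * m * h"
proof -
  define q where "q = 1 - \<sigma>"
  have q: "0 < q" "q < 1"
    using assms by (auto simp: q_def)
  have "0 \<le> m * x powr \<sigma> * h"
    using assms by simp
  then have "y < x"
    using decay by linarith
  then have "y powr q \<le> x powr q + q * x powr (q - 1) * (y - x)"
    using assms q by (intro powr_le_tangent) auto
  moreover have "q * x powr (q - 1) * (y - x) < q * x powr (q - 1) * (- m * x powr \<sigma> * h)"
    using decay q \<open>0 < x\<close> by (intro mult_strict_left_mono) auto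
  moreover have "x powr (q - 1) * x powr \<sigma> = 1"
    using \<open>0 < x\<close> by (simp add: q_def powr_add[symmetric])
  ultimately have "y powr q < x powr q - q * m * h"
    by (simp add: algebra_simps)
  then show ?thesis
    by (simp add: q_def)
qed

lemma le_max_if_decay_above:
  fixes w :: "real \<Rightarrow> real"
  assumes cont: "continuous_on {0..} w" and "0 \<le> m"
    and decay: "\<And>t. 0 \<le> t \<Longrightarrow> c < w t \<Longrightarrow>
       \<forall>\<^sub>F h in at_right 0. w (t + h) - w t < - m * w t powr \<sigma> * h"
    and "0 \<le> a" "a \<le> b"
  shows "w b \<le> max (w a) c"
proof (rule le_max_if_decreasing_above[where f = w])
  show "a \<le> b" by fact
  show "continuous_on {a..b} w"
    using cont by (rule continuous_on_subset) (use \<open>0 \<le> a\<close> in auto)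
  fix t assume "a \<le> t" "t < b" "c < w t"
  then have "\<forall>\<^sub>F h in at_right 0. w (t + h) - w t < - m * w t powr \<sigma> * h \<and> 0 < h"
    using decay[of t] \<open>0 \<le> a\<close> eventually_at_right_less[of 0] by (auto intro: eventually_conj)
  then show "\<forall>\<^sub>F h in at_right 0. w (t + h) < w t"
  proof eventually_elim
    case (elim h)
    moreover have "0 \<le> m * w t powr \<sigma> * h"
      using \<open>0 \<le> m\<close> elim by simp
    ultimately show ?case
      by linarith
  qed
qed

lemma decay_above_settles:
  fixes w :: "real \<Rightarrow> real"
  assumes cont: "continuous_on {0..} w" and nonneg: "\<And>t. 0 \<le> t \<Longrightarrow> 0 \<le> w t"
    and c: "0 \<le> c" and m: "0 < m" and \<sigma>: "0 < \<sigma>" "\<sigma> < 1"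
    and decay: "\<And>t. 0 \<le> t \<Longrightarrow> c < w t \<Longrightarrow>
       \<forall>\<^sub>F h in at_right 0. w (t + h) - w t < - m * w t powr \<sigma> * h"
    and "0 \<le> t" and late: "w 0 powr (1 - \<sigma>) / ((1 - \<sigma>) * m) < t"
  shows "w t \<le> c"
proof (rule ccontr)
  assume "\<not> w t \<le> c"
  then have above: "c < w s" if "0 \<le> s" "s \<le> t" for s
    using le_max_if_decay_above[OF cont _ decay that] m by fastforce
  \<comment> \<open>While \<open>w > c\<close>, \<open>w powr (1 - \<sigma>)\<close> decreases at rate at least \<open>(1 - \<sigma>) * m\<close>.\<close>
  define z where "z s = w s powr (1 - \<sigma>) + (1 - \<sigma>) * m * s" for s
  have "z t \<le> max (z 0) (z 0)"
  proof (rule le_max_if_decreasing_above[where f = z])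
    show "0 \<le> t" by fact
    have "continuous_on {0..t} w"
      using cont by (rule continuous_on_subset) auto
    then have "continuous_on {0..t} (\<lambda>s. w s powr (1 - \<sigma>))"
      by (rule continuous_on_powr'[OF _ continuous_on_const]) (use nonneg \<sigma> in auto)
    then show "continuous_on {0..t} z"
      unfolding z_def by (rule continuous_on_add) (intro continuous_intros)
    fix s assume s: "0 \<le> s" "s < t"
    then have "c < w s"
      using above by simp
    then have "\<forall>\<^sub>F h in at_right 0. w (s + h) - w s < - m * w s powr \<sigma> * h \<and> 0 < h"
      using decay[OF \<open>0 \<le> s\<close>] eventually_at_right_less[of 0] by (auto intro: eventually_conj)
    then show "\<forall>\<^sub>F h in at_right 0. z (s + h) < z s"
    proof eventually_elim
      case (elim h)
      then have "w (s + h) powr (1 - \<sigma>) < w s powr (1 - \<sigma>) - (1 - \<sigma>) * m * h"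
        using nonneg s \<open>c < w s\<close> c m \<sigma> by (intro powr_decrease_if_decay) auto
      then show ?case
        by (simp add: z_def algebra_simps)
    qed
  qed
  moreover have "0 \<le> w t powr (1 - \<sigma>)"
    by simp
  ultimately have "(1 - \<sigma>) * m * t \<le> w 0 powr (1 - \<sigma>)"
    unfolding z_def by linarith
  then show False
    using late m \<sigma> by (simp add: pos_divide_less_eq mult.commute)
qed

lemma class_K_mono: "class_K g \<Longrightarrow> 0 \<le> s \<Longrightarrow> s \<le> t \<Longrightarrow> g s \<le> g t"
  unfolding class_K_def by (rule strict_mono_on_leD) auto

lemma class_K_nonneg: "class_K g \<Longrightarrow> 0 \<le> s \<Longrightarrow> 0 \<le> g s"
  using class_K_mono[of g 0 s] by (simp add: class_K_def)

lemma class_K_comp: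
  assumes "class_K f" "class_K g"
  shows "class_K (\<lambda>s. f (g s))"
  unfolding class_K_def
proof (intro conjI)
  have "g ` {0..} \<subseteq> {0..}"
    using class_K_nonneg[OF assms(2)] by auto
  then show "continuous_on {0..} (\<lambda>s. f (g s))"
    using assms unfolding class_K_def by (intro continuous_on_compose2[of "{0..}" f "{0..}" g]) auto
  show "strict_mono_on {0..} (\<lambda>s. f (g s))"
    using assms class_K_nonneg[OF assms(2)] unfolding class_K_def by (auto simp: strict_mono_on_def)
  show "f (g 0) = 0"
    using assms unfolding class_K_def by simp
qed

lemma class_K_inj_on: "class_K g \<Longrightarrow> inj_on g {0..}"
  unfolding class_K_def by (blast intro: strict_mono_on_imp_inj_on)

lemma class_Kinf_image:
  assumes "class_Kinf g"
  shows "g ` {0..} = {0..}"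
proof
  show "g ` {0..} \<subseteq> {0..}"
    using assms class_K_nonneg by (auto simp: class_Kinf_def)
  show "{0..} \<subseteq> g ` {0..}"
  proof
    fix v :: real assume "v \<in> {0..}"
    obtain y where "0 \<le> y" "v \<le> g y"
      using assms unfolding class_Kinf_def filterlim_at_top eventually_at_top_linorder
      by (metis linear order_trans)
    moreover have "continuous_on {0..y} g"
      using assms by (auto simp: class_Kinf_def class_K_def intro: continuous_on_subset)
    ultimately show "v \<in> g ` {0..}"
      using IVT'[of g 0 v y] \<open>v \<in> {0..}\<close> assms by (force simp: class_Kinf_def class_K_def)
  qed
qed

lemma class_Kinf_inv_into_class_K:
  assumes "class_Kinf g"
  shows "class_K (inv_into {0..} g)"
proof -
  let ?h = "inv_into {0..} g"
  have K: "class_K g"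
    using assms by (simp add: class_Kinf_def)
  have h_g: "?h (g y) = y" if "0 \<le> y" for y
    using class_K_inj_on[OF K] that by (simp add: inv_into_f_f)
  have g_h: "g (?h v) = v" and h_nonneg: "0 \<le> ?h v" if "0 \<le> v" for v
    using class_Kinf_image[OF assms] that f_inv_into_f[of v g "{0..}"] inv_into_into[of v g "{0..}"]
    by auto
  have mono: "strict_mono_on {0..} ?h"
  proof (rule strict_mono_onI)
    fix v w :: real assume "v \<in> {0..}" "w \<in> {0..}" "v < w"
    then show "?h v < ?h w"
      using g_h h_nonneg class_K_mono[OF K, of "?h w" "?h v"]
    by (force simp: not_less[symmetric])
  qed
  \<comment> \<open>Extended by the identity to the negative reals, \<open>?h\<close> is a monotone surjection
    \<open>\<real> \<rightarrow> \<real>\<close>, hence continuous.\<close>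
  define h' where "h' v = (if 0 \<le> v then ?h v else v)" for v
  have "continuous_on UNIV h'"
  proof (rule continuous_onI_mono)
    have "h' (g v) = v" if "0 \<le> v" for v
      using that h_g class_K_nonneg[OF K] by (simp add: h'_def)
    moreover have "h' v = v" if "v < 0" for v
      using that by (simp add: h'_def)
    ultimately have "v \<in> range h'" for v
      by (metis not_le rangeI)
    then show "open (range h')"
      by (metis UNIV_eq_I open_UNIV)
    show "h' x \<le> h' y" if "x \<le> y" for x y
      using that h_nonneg[of y] strict_mono_on_leD[OF mono, of x y] by (auto simp: h'_def)
  qed
  then have "continuous_on {0..} h'"
    by (rule continuous_on_subset) simp
  then have "continuous_on {0..} ?h"
    by (rule continuous_on_eq) (simp add: h'_def)
  moreover have "?h 0 = 0"
    using h_g[of 0] K by (simp add: class_K_def)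
  ultimately show ?thesis
    using mono by (simp add: class_K_def)
qed

lemma class_GKL_cutoff:
  assumes K: "class_K K" and T: "continuous_on {0..} T" "\<And>s. 0 \<le> s \<Longrightarrow> 0 < T s"
  shows "class_GKL (\<lambda>s t. K s * min 1 (max 0 (2 - t / T s)))"
    (is "class_GKL ?\<beta>")
  unfolding class_GKL_def
proof (intro conjI allI impI)
  have "continuous_on ({0..} \<times> {0..}) (\<lambda>p. K (fst p))"
    using K by (intro continuous_on_compose2[of "{0..}" K _ fst])
      (auto simp: class_K_def intro: continuous_intros)
  moreover have "continuous_on ({0..} \<times> {0..}) (\<lambda>p. T (fst p))"
    using T by (intro continuous_on_compose2[of "{0..}" T _ fst]) (auto intro: continuous_intros)
  ultimately have "continuous_on ({0..} \<times> {0..}) (\<lambda>p. ?\<beta> (fst p) (snd p))"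
    using T(2) by (intro continuous_intros) (auto simp: less_le)
  then show "continuous_on ({0..} \<times> {0..}) (\<lambda>(s, t). ?\<beta> s t)"
    by (simp add: case_prod_beta')
  show "0 \<le> ?\<beta> s t" if "0 \<le> s" for s t
    using class_K_nonneg[OF K that] by simp
  show "class_K (\<lambda>s. ?\<beta> s 0)"
    using K by simp
  fix s :: real assume "0 \<le> s"
  then have "T s \<noteq> 0"
    using T(2) by (simp add: less_le)
  then show "continuous_on {0..} (?\<beta> s)"
    by (intro continuous_intros) auto
  show "antimono_on {0..} (?\<beta> s)"
  proof (rule monotone_onI)
    fix a b :: real assume "a \<in> {0..}" "b \<in> {0..}" "a \<le> b"
    then have "a / T s \<le> b / T s"
      using T(2)[OF \<open>0 \<le> s\<close>] by (intro divide_right_mono) auto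
    then show "?\<beta> s b \<le> ?\<beta> s a"
      using class_K_nonneg[OF K \<open>0 \<le> s\<close>] by (intro mult_left_mono) auto
  qed
  have vanish: "?\<beta> s t = 0" if "2 * T s \<le> t" for t
    using that T(2)[OF \<open>0 \<le> s\<close>] by (simp add: pos_le_divide_eq)
  then show "(?\<beta> s \<longlongrightarrow> 0) at_top"
    by (intro tendsto_eventually) (auto simp: eventually_at_top_linorder)
next
  show "\<exists>T'. continuous_on {0..} T' \<and> (\<forall>s\<ge>0. 0 \<le> T' s \<and> (\<forall>t\<ge>T' s. ?\<beta> s t = 0))"
    using T by (intro exI[of _ "\<lambda>s. 2 * T s"])
      (auto intro: continuous_intros simp: less_imp_le pos_le_divide_eq)
qed

lemma BC_bdd_above_norm:
  assumes "u \<in> BC"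
  shows "bdd_above ((\<lambda>s. norm (u s)) ` {0..})"
proof -
  obtain B where "\<forall>x\<in>u ` {0..}. norm x \<le> B"
    using assms unfolding BC_def bounded_iff by blast
  then show ?thesis
    by (intro bdd_aboveI[of _ B]) auto
qed

lemma ucnorm_upper: "u \<in> BC \<Longrightarrow> 0 \<le> s \<Longrightarrow> norm (u s) \<le> ucnorm u"
  unfolding ucnorm_def by (rule cSUP_upper[OF _ BC_bdd_above_norm]) auto

lemma ucnorm_nonneg: "u \<in> BC \<Longrightarrow> 0 \<le> ucnorm u"
  using ucnorm_upper[of u 0] norm_ge_zero order_trans by blast

lemma BC_shift:
  assumes "u \<in> BC" "0 \<le> t"
  shows "(\<lambda>s. u (t + s)) \<in> BC"
proof -
  have "continuous_on {0..} u"
    using assms by (simp add: BC_def)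
  then have "continuous_on {0..} (\<lambda>s. u (t + s))"
    by (rule continuous_on_compose2) (use assms in \<open>auto intro!: continuous_intros\<close>)
  moreover have "(\<lambda>s. u (t + s)) ` {0..} \<subseteq> u ` {0..}"
    using assms by auto
  then have "bounded ((\<lambda>s. u (t + s)) ` {0..})"
    using assms unfolding BC_def by (blast intro: bounded_subset)
  ultimately show ?thesis
    by (simp add: BC_def)
qed

lemma ucnorm_shift_le:
  assumes "u \<in> BC" "0 \<le> t"
  shows "ucnorm (\<lambda>s. u (t + s)) \<le> ucnorm u"
  unfolding ucnorm_def[of "\<lambda>s. u (t + s)"]
proof (rule cSUP_least)
  fix s :: real assume "s \<in> {0..}"
  then show "norm (u (t + s)) \<le> ucnorm u"
    using assms by (intro ucnorm_upper) auto
qed simp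

lemma control_system_init: "control_system \<phi> \<Longrightarrow> u \<in> BC \<Longrightarrow> \<phi> 0 x u = x"
  unfolding control_system_def by blast

lemma control_system_continuous:
  "control_system \<phi> \<Longrightarrow> u \<in> BC \<Longrightarrow> continuous_on {0..} (\<lambda>t. \<phi> t x u)"
  unfolding control_system_def by blast

lemma control_system_cocycle:
  "control_system \<phi> \<Longrightarrow> u \<in> BC \<Longrightarrow> 0 \<le> t \<Longrightarrow> 0 \<le> h \<Longrightarrow>
    \<phi> h (\<phi> t x u) (\<lambda>s. u (t + s)) = \<phi> (t + h) x u"
  unfolding control_system_def by blast

lemma lie_deriv_less_imp_eventually:
  assumes "lie_deriv \<phi> V u x < ereal r"
  shows "\<forall>\<^sub>F h in at_right 0. V (\<phi> h x u) - V x < r * h"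
proof -
  have "\<forall>\<^sub>F h in at_right 0. ereal ((V (\<phi> h x u) - V x) / h) < ereal r"
    using assms unfolding lie_deriv_def by (rule Limsup_lessD)
  moreover have "\<forall>\<^sub>F h in at_right (0::real). 0 < h"
    by (rule eventually_at_right_less)
  ultimately show ?thesis
    by eventually_elim (simp add: pos_divide_less_eq)
qed

lemma FTISS_Lyapunov_decay_along_trajectory:
  fixes \<phi> :: "real \<Rightarrow> 'x::banach \<Rightarrow> (real \<Rightarrow> 'u::banach) \<Rightarrow> 'x"
  assumes "control_system \<phi>" and "0 < M" and chi: "class_K chi" and \<alpha>2: "class_K \<alpha>2"
    and V_le: "\<And>x. V x \<le> \<alpha>2 (norm x)"
    and lie: "\<And>x u. u \<in> BC \<Longrightarrow> chi (ucnorm u) \<le> norm x \<Longrightarrow>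
      lie_deriv \<phi> V u x \<le> ereal (- M * V x powr \<sigma>)"
    and u: "u \<in> BC" and "0 \<le> t" and above: "\<alpha>2 (chi (ucnorm u)) < V (\<phi> t x u)"
  shows "\<forall>\<^sub>F h in at_right 0.
    V (\<phi> (t + h) x u) - V (\<phi> t x u) < - (M / 2) * V (\<phi> t x u) powr \<sigma> * h"
proof -
  define y where "y = \<phi> t x u"
  define v where "v = (\<lambda>s. u (t + s))"
  have v: "v \<in> BC"
    unfolding v_def using u \<open>0 \<le> t\<close> by (rule BC_shift)
  have "chi (ucnorm v) \<le> chi (ucnorm u)"
    unfolding v_def using chi ucnorm_nonneg[OF BC_shift] ucnorm_shift_le u \<open>0 \<le> t\<close>
    by (blast intro: class_K_mono)
  also have "chi (ucnorm u) \<le> norm y"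
  proof (rule ccontr)
    assume "\<not> chi (ucnorm u) \<le> norm y"
    then have "\<alpha>2 (norm y) \<le> \<alpha>2 (chi (ucnorm u))"
      by (intro class_K_mono[OF \<alpha>2]) auto
    then show False
      using above V_le[of y] by (simp add: y_def)
  qed
  finally have "lie_deriv \<phi> V v y \<le> ereal (- M * V y powr \<sigma>)"
    by (rule lie[OF v])
  also have "\<dots> < ereal (- (M / 2) * V y powr \<sigma>)"
    using above class_K_nonneg[OF \<alpha>2 class_K_nonneg[OF chi ucnorm_nonneg[OF u]]] \<open>0 < M\<close>
    by (simp add: y_def)
  finally have "\<forall>\<^sub>F h in at_right 0. V (\<phi> h y v) - V y < - (M / 2) * V y powr \<sigma> * h"
    by (rule lie_deriv_less_imp_eventually)
  moreover have "\<forall>\<^sub>F h in at_right (0::real). 0 < h"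
    by (rule eventually_at_right_less)
  ultimately show ?thesis
    by eventually_elim
      (simp add: y_def v_def control_system_cocycle[OF \<open>control_system \<phi>\<close> u \<open>0 \<le> t\<close>])
qed

lemma FTISS_Lyapunov_settling_estimate:
  fixes \<phi> :: "real \<Rightarrow> 'x::banach \<Rightarrow> (real \<Rightarrow> 'u::banach) \<Rightarrow> 'x"
  assumes cs: "control_system \<phi>" and V_cont: "continuous_on UNIV V" and V_nonneg: "\<And>x. 0 \<le> V x"
    and M: "0 < M" and \<sigma>: "0 < \<sigma>" "\<sigma> < 1" and chi: "class_K chi" and \<alpha>2: "class_K \<alpha>2"
    and V_le: "\<And>x. V x \<le> \<alpha>2 (norm x)"
    and lie: "\<And>x u. u \<in> BC \<Longrightarrow> chi (ucnorm u) \<le> norm x \<Longrightarrow>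
      lie_deriv \<phi> V u x \<le> ereal (- M * V x powr \<sigma>)"
    and u: "u \<in> BC" and "0 \<le> t"
  shows "V (\<phi> t x u) \<le> max (V x) (\<alpha>2 (chi (ucnorm u)))"
    and "V x powr (1 - \<sigma>) / ((1 - \<sigma>) * (M / 2)) < t \<Longrightarrow>
      V (\<phi> t x u) \<le> \<alpha>2 (chi (ucnorm u))"
proof -
  let ?w = "\<lambda>t. V (\<phi> t x u)"
  define c where "c = \<alpha>2 (chi (ucnorm u))"
  have "0 \<le> c"
    unfolding c_def using class_K_nonneg[OF \<alpha>2 class_K_nonneg[OF chi ucnorm_nonneg[OF u]]] .
  have cont: "continuous_on {0..} ?w"
    using V_cont control_system_continuous[OF cs u] by (rule continuous_on_compose2) auto
  have decay: "\<forall>\<^sub>F h in at_right 0. ?w (s + h) - ?w s < - (M / 2) * ?w s powr \<sigma> * h"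
    if "0 \<le> s" "c < ?w s" for s
    using FTISS_Lyapunov_decay_along_trajectory[where \<phi> = \<phi> and V = V and u = u and x = x,
      OF cs M chi \<alpha>2 V_le lie u that[unfolded c_def]] by simp
  have "?w 0 = V x"
    using control_system_init[OF cs u] by simp
  have "?w t \<le> max (?w 0) c"
    by (rule le_max_if_decay_above[OF cont _ decay]) (use M \<open>0 \<le> t\<close> in auto)
  then show "?w t \<le> max (V x) (\<alpha>2 (chi (ucnorm u)))"
    using \<open>?w 0 = V x\<close> by (simp add: c_def)
  show "?w t \<le> \<alpha>2 (chi (ucnorm u))" if "V x powr (1 - \<sigma>) / ((1 - \<sigma>) * (M / 2)) < t"
    unfolding c_def[symmetric]
    by (rule decay_above_settles[OF cont _ \<open>0 \<le> c\<close> _ \<sigma> decay \<open>0 \<le> t\<close>])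
      (use V_nonneg M that \<open>?w 0 = V x\<close> in auto)
qed

lemma FTISS_if_settling_estimate:
  fixes \<phi> :: "real \<Rightarrow> 'x::banach \<Rightarrow> (real \<Rightarrow> 'u::banach) \<Rightarrow> 'x" and V :: "'x \<Rightarrow> real"
  assumes \<alpha>1: "class_Kinf \<alpha>1" and \<alpha>2: "class_K \<alpha>2" and g: "class_K g"
    and V_ge: "\<And>x. \<alpha>1 (norm x) \<le> V x" and V_le: "\<And>x. V x \<le> \<alpha>2 (norm x)"
    and "0 < q" "0 < k"
    and bounded: "\<And>t x u. 0 \<le> t \<Longrightarrow> u \<in> BC \<Longrightarrow>
      V (\<phi> t x u) \<le> max (V x) (g (ucnorm u))"
    and settles: "\<And>t x u. 0 \<le> t \<Longrightarrow> u \<in> BC \<Longrightarrow> V x powr q / k < t \<Longrightarrow>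
      V (\<phi> t x u) \<le> g (ucnorm u)"
  shows "FTISS \<phi>"
proof -
  define \<alpha>1_inv where "\<alpha>1_inv = inv_into {0..} \<alpha>1"
  have \<alpha>1K: "class_K \<alpha>1"
    using \<alpha>1 by (simp add: class_Kinf_def)
  have inv: "class_K \<alpha>1_inv"
    unfolding \<alpha>1_inv_def using \<alpha>1 by (rule class_Kinf_inv_into_class_K)
  have norm_le: "norm x \<le> \<alpha>1_inv v" if "V x \<le> v" for x v
  proof -
    have "\<alpha>1 (norm x) \<le> v"
      using V_ge that by (rule order_trans)
    then have "\<alpha>1_inv (\<alpha>1 (norm x)) \<le> \<alpha>1_inv v"
      using class_K_mono[OF inv] class_K_nonneg[OF \<alpha>1K norm_ge_zero] by blast
    then show ?thesis
      using class_K_inj_on[OF \<alpha>1K] by (simp add: \<alpha>1_inv_def inv_into_f_f)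
  qed
  define K where "K s = \<alpha>1_inv (\<alpha>2 s)" for s
  define T where "T s = \<alpha>2 s powr q / k + 1" for s
  \<comment> \<open>\<open>\<beta> s\<close> keeps the overshoot bound \<open>K s\<close> up to the settling time \<open>T s\<close>
    and vanishes from \<open>2 * T s\<close> on.\<close>
  define \<beta> where "\<beta> s t = K s * min 1 (max 0 (2 - t / T s))" for s t
  have K: "class_K K"
    unfolding K_def using inv \<alpha>2 by (rule class_K_comp)
  have "continuous_on {0..} (\<lambda>s. \<alpha>2 s powr q)"
    by (rule continuous_on_powr'[OF _ continuous_on_const])
      (use \<alpha>2 class_K_nonneg[OF \<alpha>2] \<open>0 < q\<close> in \<open>auto simp: class_K_def\<close>)
  then have "continuous_on {0..} T"
    unfolding T_def using \<open>0 < k\<close>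
    by (intro continuous_on_add continuous_on_divide continuous_on_const) auto
  moreover have T_pos: "0 < T s" for s
    using \<open>0 < k\<close> by (simp add: T_def add_nonneg_pos)
  ultimately have "class_GKL \<beta>"
    unfolding \<beta>_def using K by (intro class_GKL_cutoff)
  moreover have \<gamma>: "class_K (\<lambda>r. \<alpha>1_inv (g r))"
    using inv g by (rule class_K_comp)
  moreover have "norm (\<phi> t x u) \<le> \<beta> (norm x) t + \<alpha>1_inv (g (ucnorm u))"
    if "0 \<le> t" "u \<in> BC" for t x u
  proof -
    have K_nonneg: "0 \<le> K (norm x)"
      using class_K_nonneg[OF K norm_ge_zero] .
    have \<gamma>_nonneg: "0 \<le> \<alpha>1_inv (g (ucnorm u))"
      using class_K_nonneg[OF \<gamma> ucnorm_nonneg[OF \<open>u \<in> BC\<close>]] .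
    show ?thesis
    proof (cases "V x powr q / k < t")
      case True
      then have "norm (\<phi> t x u) \<le> \<alpha>1_inv (g (ucnorm u))"
        using settles[OF that] norm_le by blast
      moreover have "0 \<le> \<beta> (norm x) t"
        using K_nonneg by (simp add: \<beta>_def)
      ultimately show ?thesis
        by linarith
    next
      case False
      have "V x powr q \<le> \<alpha>2 (norm x) powr q"
        using V_le[of x] order_trans[OF class_K_nonneg[OF \<alpha>1K norm_ge_zero] V_ge] \<open>0 < q\<close>
        by (intro powr_mono2) auto
      then have "V x powr q / k \<le> \<alpha>2 (norm x) powr q / k"
        using \<open>0 < k\<close> by (simp add: divide_right_mono)
      then have "t < T (norm x)"
        using False by (simp add: T_def)
      then have "t / T (norm x) < 1"
        using T_pos[of "norm x"] by (simp add: divide_less_eq)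
      then have "\<beta> (norm x) t = K (norm x)"
        by (simp add: \<beta>_def)
      have "norm (\<phi> t x u) \<le> \<alpha>1_inv (max (\<alpha>2 (norm x)) (g (ucnorm u)))"
        using bounded[OF that, of x] V_le[of x]
        by (intro norm_le) (auto simp: max_def split: if_splits)
      also have "\<dots> \<le> K (norm x) + \<alpha>1_inv (g (ucnorm u))"
        using K_nonneg \<gamma>_nonneg by (simp add: K_def max_def)
      finally show ?thesis
        using \<open>\<beta> (norm x) t = K (norm x)\<close> by simp
    qed
  qed
  ultimately show ?thesis
    unfolding FTISS_def by blast
qed

theorem theorem1:
  fixes \<phi> :: "real \<Rightarrow> 'x::banach \<Rightarrow> (real \<Rightarrow> 'u::banach) \<Rightarrow> 'x"
  assumes "control_system \<phi>"
    and "equilibrium \<phi> 0"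
    and "\<And>x. equilibrium \<phi> x \<Longrightarrow> x = 0"
    and "\<exists>V. FTISS_Lyapunov \<phi> V"
  shows "FTISS \<phi>"
proof -
  obtain V M \<sigma> \<alpha>1 \<alpha>2 chi where V: "continuous_on UNIV V" "\<And>x. 0 \<le> V x"
    and "0 < M" "0 < \<sigma>" "\<sigma> < 1"
    and \<alpha>1: "class_Kinf \<alpha>1" and \<alpha>2: "class_Kinf \<alpha>2" and chi: "class_K chi"
    and V_bounds: "\<And>x. \<alpha>1 (norm x) \<le> V x \<and> V x \<le> \<alpha>2 (norm x)"
    and lie: "\<And>x u. u \<in> BC \<Longrightarrow> chi (ucnorm u) \<le> norm x \<Longrightarrow>
      lie_deriv \<phi> V u x \<le> ereal (- M * V x powr \<sigma>)"
    using assms(4) unfolding FTISS_Lyapunov_def by metis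
  have "class_K \<alpha>2"
    using \<alpha>2 by (simp add: class_Kinf_def)
  note estimate = FTISS_Lyapunov_settling_estimate[OF assms(1) V \<open>0 < M\<close> \<open>0 < \<sigma>\<close> \<open>\<sigma> < 1\<close>
      chi \<open>class_K \<alpha>2\<close> _ lie]
  show ?thesis
  proof (rule FTISS_if_settling_estimate[where V = V and q = "1 - \<sigma>"
        and k = "(1 - \<sigma>) * (M / 2)", OF \<alpha>1 \<open>class_K \<alpha>2\<close> class_K_comp[OF \<open>class_K \<alpha>2\<close> chi]])
    show "0 < 1 - \<sigma>" "0 < (1 - \<sigma>) * (M / 2)"
      using \<open>0 < M\<close> \<open>\<sigma> < 1\<close> by auto
  qed (use V_bounds estimate in \<open>blast+\<close>)
qed

end
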